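(* In the communication-compressed SGD with error feedback described in the context, where the compression operator $Q$ satisfies $\|Q(\vec w)-\vec w\|^2\le\gamma\|\vec w\|^2$ for all $\vec w\in\mathbb{R}^d$ with $0\le\gamma<1$, for every node $q$ and iteration $t\ge0$, $$\mathbb{E}\|\vec x_t-\vec v_t^q\|^2\le\frac{(2-\gamma)\gamma M^2\alpha^2}{(1-\gamma)^3}.$$
   Context: There are $p$ nodes $\mathcal P=\{1,\dots,p\}$ and a learning rate $\alpha>0$. Each node $i$ keeps a view $\vec v_t^i$ and an error vector $\vec\epsilon_t^i$, with $\vec v_0^i=\vec\epsilon_0^i=\vec 0$; also $\vec x_0=\vec 0$. At iteration $t$, node $i$ computes a stochastic gradient $\tilde G(\vec v_t^i)$ with $\mathbb{E}\|\tilde G(\vec v_t^i)\|^2\le M^2$, forms $\vec w_t^i=\vec\epsilon_t^i+\alpha\tilde G(\vec v_t^i)$, broadcasts $Q(\vec w_t^i)$, and sets $\vec\epsilon_{t+1}^i=\vec w_t^i-Q(\vec w_t^i)$. Every node $q$ updates $\vec v_{t+1}^q=\vec v_t^q-\frac1p\sum_{i\in\mathcal P}Q(\vec w_t^i)$ (so all views coincide), and the global parameter is $\vec x_{t+1}=\vec x_t-\frac{\alpha}{p}\sum_{i\in\mathcal P}\tilde G(\vec v_t^i)$. *)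

theory Defs
  imports "HOL-Probability.Probability"
begin

text \<open>State of the error-feedback compressed SGD after t iterations, for one fixed
  outcome of the randomness.  Nodes are 1..p.  Q is the compression operator,
  G v s is the stochastic gradient at point v with random sample s, and
  xi t i is the sample used by node i at iteration t.
  The state is (views v_t^i, error vectors eps_t^i, global parameter x_t).\<close>

fun ef_state :: "('v::real_normed_vector \<Rightarrow> 'v) \<Rightarrow> ('v \<Rightarrow> 'b \<Rightarrow> 'v) \<Rightarrow> (nat \<Rightarrow> nat \<Rightarrow> 'b)
    \<Rightarrow> nat \<Rightarrow> real \<Rightarrow> nat \<Rightarrow> (nat \<Rightarrow> 'v) \<times> (nat \<Rightarrow> 'v) \<times> 'v" where
  "ef_state Q G xi p \<alpha> 0 = ((\<lambda>i. 0), (\<lambda>i. 0), 0)"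
| "ef_state Q G xi p \<alpha> (Suc t) =
     (case ef_state Q G xi p \<alpha> t of (v, e, x) \<Rightarrow>
        (let g = (\<lambda>i. G (v i) (xi t i));
             w = (\<lambda>i. e i + \<alpha> *\<^sub>R g i)
         in ((\<lambda>q. v q - (1 / real p) *\<^sub>R (\<Sum>i\<in>{1..p}. Q (w i))),
             (\<lambda>i. w i - Q (w i)),
             x - (\<alpha> / real p) *\<^sub>R (\<Sum>i\<in>{1..p}. g i))))"

definition ef_view where
  "ef_view Q G xi p \<alpha> t q = fst (ef_state Q G xi p \<alpha> t) q"

definition ef_err where
  "ef_err Q G xi p \<alpha> t i = fst (snd (ef_state Q G xi p \<alpha> t)) i"

definition ef_x where
  "ef_x Q G xi p \<alpha> t = snd (snd (ef_state Q G xi p \<alpha> t))"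

definition ef_grad where
  "ef_grad Q G xi p \<alpha> t i = G (ef_view Q G xi p \<alpha> t i) (xi t i)"

end

theory Submission
  imports Defs
begin

text \<open>Write \<open>\<gamma> = s\<^sup>2\<close>. All views coincide, and \<open>x - v\<close> is minus the mean of the error
  vectors. Each error vector satisfies \<open>\<epsilon>' = w - Q w\<close> with \<open>w = \<epsilon> + \<alpha> g\<close>, so
  \<open>\<parallel>\<epsilon>'\<parallel> \<le> s (\<parallel>\<epsilon>\<parallel> + \<alpha>\<parallel>g\<parallel>)\<close>; a weighted Young inequality turns this into
  \<open>\<parallel>\<epsilon>'\<parallel>\<^sup>2 \<le> s\<parallel>\<epsilon>\<parallel>\<^sup>2 + s\<^sup>2/(1-s) \<alpha>\<^sup>2\<parallel>g\<parallel>\<^sup>2\<close>, and unrolling gives a geometrically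
  discounted sum of squared gradients. The bound is linear in these, so taking expectations
  yields \<open>s\<^sup>2 \<alpha>\<^sup>2 M\<^sup>2/(1-s)\<^sup>2\<close>, which lies below \<open>(2-\<gamma>)\<gamma>\<alpha>\<^sup>2M\<^sup>2/(1-\<gamma>)\<^sup>3\<close>.\<close>

lemma ef_err_0 [simp]: "ef_err Q G xi p \<alpha> 0 i = 0"
  by (simp add: ef_err_def)

lemma ef_view_Suc: "ef_view Q G xi p \<alpha> (Suc t) q = ef_view Q G xi p \<alpha> t q
   - (1 / real p) *\<^sub>R (\<Sum>i\<in>{1..p}. Q (ef_err Q G xi p \<alpha> t i + \<alpha> *\<^sub>R ef_grad Q G xi p \<alpha> t i))"
  by (simp add: ef_view_def ef_err_def ef_grad_def split: prod.split)

lemma ef_err_Suc: "ef_err Q G xi p \<alpha> (Suc t) i =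
   (ef_err Q G xi p \<alpha> t i + \<alpha> *\<^sub>R ef_grad Q G xi p \<alpha> t i)
   - Q (ef_err Q G xi p \<alpha> t i + \<alpha> *\<^sub>R ef_grad Q G xi p \<alpha> t i)"
  by (simp add: ef_view_def ef_err_def ef_grad_def split: prod.split)

lemma ef_x_Suc: "ef_x Q G xi p \<alpha> (Suc t) =
   ef_x Q G xi p \<alpha> t - (\<alpha> / real p) *\<^sub>R (\<Sum>i\<in>{1..p}. ef_grad Q G xi p \<alpha> t i)"
  by (simp add: ef_view_def ef_x_def ef_grad_def split: prod.split)

lemma ef_x_minus_view:
  "ef_x Q G xi p \<alpha> t - ef_view Q G xi p \<alpha> t q =
   - ((1 / real p) *\<^sub>R (\<Sum>i\<in>{1..p}. ef_err Q G xi p \<alpha> t i))"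
proof (induction t)
  case 0
  then show ?case by (simp add: ef_view_def ef_x_def)
next
  case (Suc t)
  have "(\<alpha> / real p) *\<^sub>R (\<Sum>i\<in>{1..p}. ef_grad Q G xi p \<alpha> t i) =
        (1 / real p) *\<^sub>R (\<Sum>i\<in>{1..p}. \<alpha> *\<^sub>R ef_grad Q G xi p \<alpha> t i)"
    by (simp add: scaleR_sum_right)
  then show ?case
    unfolding ef_view_Suc ef_x_Suc ef_err_Suc using Suc.IH
    by (simp add: sum_subtractf sum.distrib scaleR_diff_right scaleR_add_right algebra_simps)
qed

lemma weighted_young_sq_add_le:
  fixes s A B :: real
  assumes "0 \<le> s" "s < 1"
  shows "s\<^sup>2 * (A + B)\<^sup>2 \<le> s * A\<^sup>2 + s\<^sup>2 / (1 - s) * B\<^sup>2"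
proof -
  have "2 * s * (1 - s) * A * B \<le> (1 - s)\<^sup>2 * A\<^sup>2 + s\<^sup>2 * B\<^sup>2"
    using zero_le_power2[of "(1 - s) * A - s * B"] by (simp add: power2_eq_square algebra_simps)
  then have "2 * s * A * B \<le> (1 - s) * A\<^sup>2 + s\<^sup>2 / (1 - s) * B\<^sup>2"
    using assms by (simp add: field_simps power2_eq_square)
  then have "s * (A + B)\<^sup>2 \<le> A\<^sup>2 + s / (1 - s) * B\<^sup>2"
    using assms by (simp add: field_simps power2_eq_square)
  from mult_left_mono[OF this assms(1)] show ?thesis
    by (simp add: power2_eq_square algebra_simps)
qed

lemma sum_pow_diff_Suc:
  fixes s :: real
  shows "(\<Sum>k<Suc t. s ^ (Suc t - k) * a k) = s * (\<Sum>k<t. s ^ (t - k) * a k) + s * a t"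
proof -
  have "(\<Sum>k<t. s ^ (Suc t - k) * a k) = (\<Sum>k<t. s * (s ^ (t - k) * a k))"
    by (intro sum.cong) (auto simp: Suc_diff_le less_imp_le)
  then show ?thesis by (simp add: sum_distrib_left)
qed

lemma sum_pow_diff_le:
  fixes s :: real
  assumes "0 \<le> s" "s < 1"
  shows "(\<Sum>k<t. s ^ (t - k)) \<le> s / (1 - s)"
proof (induction t)
  case 0
  then show ?case using assms by simp
next
  case (Suc t)
  have "(\<Sum>k<Suc t. s ^ (Suc t - k)) = s * (\<Sum>k<t. s ^ (t - k)) + s"
    using sum_pow_diff_Suc[of s t "\<lambda>_. 1"] by simp
  also have "\<dots> \<le> s * (s / (1 - s)) + s"
    using Suc.IH assms by (intro add_right_mono mult_left_mono) auto
  also have "\<dots> = s / (1 - s)"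
    using assms by (simp add: field_simps)
  finally show ?case .
qed

lemma error_feedback_norm_sq_le:
  fixes Q :: "'v::real_normed_vector \<Rightarrow> 'v" and e a :: "nat \<Rightarrow> 'v" and s :: real
  assumes s: "0 \<le> s" "s < 1"
    and Q: "\<And>w. (norm (Q w - w))\<^sup>2 \<le> s\<^sup>2 * (norm w)\<^sup>2"
    and e_0: "e 0 = 0"
    and e_Suc: "\<And>t. e (Suc t) = (e t + a t) - Q (e t + a t)"
  shows "(norm (e t))\<^sup>2 \<le> s / (1 - s) * (\<Sum>k<t. s ^ (t - k) * (norm (a k))\<^sup>2)"
proof (induction t)
  case 0
  then show ?case by (simp add: e_0)
next
  case (Suc t)
  let ?S = "\<Sum>k<t. s ^ (t - k) * (norm (a k))\<^sup>2"
  have "(norm (e (Suc t)))\<^sup>2 = (norm (Q (e t + a t) - (e t + a t)))\<^sup>2"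
    by (simp add: e_Suc norm_minus_commute)
  also have "\<dots> \<le> s\<^sup>2 * (norm (e t + a t))\<^sup>2" by (rule Q)
  also have "\<dots> \<le> s\<^sup>2 * (norm (e t) + norm (a t))\<^sup>2"
    by (intro mult_left_mono power_mono norm_triangle_ineq) auto
  also have "\<dots> \<le> s * (norm (e t))\<^sup>2 + s\<^sup>2 / (1 - s) * (norm (a t))\<^sup>2"
    using s by (rule weighted_young_sq_add_le)
  also have "\<dots> \<le> s * (s / (1 - s) * ?S) + s\<^sup>2 / (1 - s) * (norm (a t))\<^sup>2"
    using Suc.IH s by (intro add_right_mono mult_left_mono) auto
  also have "\<dots> = s / (1 - s) * (s * ?S + s * (norm (a t))\<^sup>2)"
    by (simp add: power2_eq_square algebra_simps add_divide_distrib)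
  also have "\<dots> = s / (1 - s) * (\<Sum>k<Suc t. s ^ (Suc t - k) * (norm (a k))\<^sup>2)"
    unfolding sum_pow_diff_Suc ..
  finally show ?case .
qed

lemma norm_mean_sq_le:
  fixes e :: "'i \<Rightarrow> 'v::real_normed_vector"
  assumes "finite A"
  shows "(norm ((1 / real (card A)) *\<^sub>R sum e A))\<^sup>2 \<le> (1 / real (card A)) * (\<Sum>i\<in>A. (norm (e i))\<^sup>2)"
proof -
  have "(norm ((1 / real (card A)) *\<^sub>R sum e A))\<^sup>2 = (1 / real (card A))\<^sup>2 * (norm (sum e A))\<^sup>2"
    by (simp add: power_divide)
  also have "\<dots> \<le> (1 / real (card A))\<^sup>2 * (\<Sum>i\<in>A. norm (e i))\<^sup>2"
    by (intro mult_left_mono power_mono norm_sum) auto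
  also have "\<dots> \<le> (1 / real (card A))\<^sup>2 * ((\<Sum>i\<in>A. (norm (e i))\<^sup>2) * real (card A))"
    using sum_squared_le_sum_of_squares[of "\<lambda>i. norm (e i)" A] assms
    by (intro mult_left_mono) auto
  also have "\<dots> = (1 / real (card A)) * (\<Sum>i\<in>A. (norm (e i))\<^sup>2)"
    by (simp add: power2_eq_square)
  finally show ?thesis .
qed

lemma ef_x_minus_view_norm_sq_le:
  fixes Q :: "'v::real_normed_vector \<Rightarrow> 'v" and s \<alpha> :: real
  assumes s: "0 \<le> s" "s < 1"
    and Q: "\<And>w. (norm (Q w - w))\<^sup>2 \<le> s\<^sup>2 * (norm w)\<^sup>2"
  shows "(norm (ef_x Q G xi p \<alpha> t - ef_view Q G xi p \<alpha> t q))\<^sup>2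
     \<le> (1 / real p) * (\<Sum>i\<in>{1..p}. s / (1 - s) *
          (\<Sum>k<t. s ^ (t - k) * (\<alpha>\<^sup>2 * (norm (ef_grad Q G xi p \<alpha> k i))\<^sup>2)))"
proof -
  have err: "(norm (ef_err Q G xi p \<alpha> t i))\<^sup>2 \<le> s / (1 - s) *
          (\<Sum>k<t. s ^ (t - k) * (\<alpha>\<^sup>2 * (norm (ef_grad Q G xi p \<alpha> k i))\<^sup>2))" for i
    using error_feedback_norm_sq_le[OF s Q, of "\<lambda>t. ef_err Q G xi p \<alpha> t i"
        "\<lambda>t. \<alpha> *\<^sub>R ef_grad Q G xi p \<alpha> t i" t]
    by (simp add: ef_err_Suc power_mult_distrib)
  have "(norm (ef_x Q G xi p \<alpha> t - ef_view Q G xi p \<alpha> t q))\<^sup>2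
        \<le> (1 / real p) * (\<Sum>i\<in>{1..p}. (norm (ef_err Q G xi p \<alpha> t i))\<^sup>2)"
    using norm_mean_sq_le[of "{1..p}" "ef_err Q G xi p \<alpha> t"]
    by (simp add: ef_x_minus_view)
  also have "\<dots> \<le> (1 / real p) * (\<Sum>i\<in>{1..p}. s / (1 - s) *
          (\<Sum>k<t. s ^ (t - k) * (\<alpha>\<^sup>2 * (norm (ef_grad Q G xi p \<alpha> k i))\<^sup>2)))"
    by (intro mult_left_mono sum_mono err) auto
  finally show ?thesis .
qed

lemma (in prob_space) expectation_discounted_mean_le:
  fixes g :: "nat \<Rightarrow> nat \<Rightarrow> 'a \<Rightarrow> real" and s c Mg :: real
  assumes s: "0 \<le> s" "s < 1" and "p \<ge> 1" and "0 \<le> c"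
    and int: "\<And>k i. i \<in> {1..p} \<Longrightarrow> integrable M (g k i)"
    and bnd: "\<And>k i. i \<in> {1..p} \<Longrightarrow> (\<integral>\<omega>. g k i \<omega> \<partial>M) \<le> Mg\<^sup>2"
  shows "integrable M (\<lambda>\<omega>. (1 / real p) * (\<Sum>i\<in>{1..p}. s / (1 - s) * (\<Sum>k<t. s ^ (t - k) * (c * g k i \<omega>))))"
    and "(\<integral>\<omega>. (1 / real p) * (\<Sum>i\<in>{1..p}. s / (1 - s) * (\<Sum>k<t. s ^ (t - k) * (c * g k i \<omega>))) \<partial>M)
         \<le> s\<^sup>2 / (1 - s)\<^sup>2 * (c * Mg\<^sup>2)"
proof -
  show "integrable M (\<lambda>\<omega>. (1 / real p) * (\<Sum>i\<in>{1..p}. s / (1 - s) * (\<Sum>k<t. s ^ (t - k) * (c * g k i \<omega>))))"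
    using int by (intro integrable_mult_right integrable_sum) auto
  have "(\<integral>\<omega>. (1 / real p) * (\<Sum>i\<in>{1..p}. s / (1 - s) * (\<Sum>k<t. s ^ (t - k) * (c * g k i \<omega>))) \<partial>M)
        = (1 / real p) * (\<Sum>i\<in>{1..p}. s / (1 - s) * (\<Sum>k<t. s ^ (t - k) * (c * (\<integral>\<omega>. g k i \<omega> \<partial>M))))"
    using int by (simp add: integral_sum integrable_sum)
  also have "\<dots> \<le> (1 / real p) * (\<Sum>i\<in>{1..p}. s / (1 - s) * (\<Sum>k<t. s ^ (t - k) * (c * Mg\<^sup>2)))"
    using bnd s \<open>0 \<le> c\<close> by (intro mult_left_mono sum_mono mult_nonneg_nonneg) auto
  also have "\<dots> = s / (1 - s) * (c * Mg\<^sup>2) * (\<Sum>k<t. s ^ (t - k))"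
    unfolding sum_distrib_right[symmetric] using \<open>p \<ge> 1\<close> by simp
  also have "\<dots> \<le> s / (1 - s) * (c * Mg\<^sup>2) * (s / (1 - s))"
    using sum_pow_diff_le[OF s] s \<open>0 \<le> c\<close> by (intro mult_left_mono) auto
  also have "\<dots> = s\<^sup>2 / (1 - s)\<^sup>2 * (c * Mg\<^sup>2)"
    by (simp add: power2_eq_square)
  finally show "(\<integral>\<omega>. (1 / real p) * (\<Sum>i\<in>{1..p}. s / (1 - s) * (\<Sum>k<t. s ^ (t - k) * (c * g k i \<omega>))) \<partial>M)
         \<le> s\<^sup>2 / (1 - s)\<^sup>2 * (c * Mg\<^sup>2)" .
qed

lemma sq_div_one_minus_sq_le:
  fixes s :: real
  assumes "0 \<le> s" "s < 1"
  shows "s\<^sup>2 / (1 - s)\<^sup>2 \<le> (2 - s\<^sup>2) * s\<^sup>2 / (1 - s\<^sup>2) ^ 3"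
proof -
  have pos: "0 < 1 - s" "0 < 1 + s" using assms by auto
  have factor: "(1 - s\<^sup>2) ^ 3 = (1 - s)\<^sup>2 * ((1 - s) * (1 + s) ^ 3)"
    by (simp add: power2_eq_square power3_eq_cube algebra_simps)
  have "2 - s\<^sup>2 - (1 - s) * (1 + s) ^ 3 = (s\<^sup>2 + s - 1)\<^sup>2"
    by (simp add: power2_eq_square power3_eq_cube algebra_simps)
  then have "(1 - s) * (1 + s) ^ 3 \<le> 2 - s\<^sup>2"
    by (metis diff_ge_0_iff_ge zero_le_power2)
  then have "s\<^sup>2 * (1 - s)\<^sup>2 * ((1 - s) * (1 + s) ^ 3) \<le> s\<^sup>2 * (1 - s)\<^sup>2 * (2 - s\<^sup>2)"
    by (intro mult_left_mono) auto
  then have "s\<^sup>2 * (1 - s\<^sup>2) ^ 3 \<le> (2 - s\<^sup>2) * s\<^sup>2 * (1 - s)\<^sup>2"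
    unfolding factor by (simp only: ac_simps)
  moreover have "0 < (1 - s\<^sup>2) ^ 3"
    using pos unfolding factor by simp
  ultimately show ?thesis
    using pos by (simp add: divide_simps)
qed

theorem mainTheorem13:
  fixes M :: "'a measure"
    and Q :: "'v::euclidean_space \<Rightarrow> 'v"
    and G :: "'v \<Rightarrow> 'b \<Rightarrow> 'v"
    and \<xi> :: "nat \<Rightarrow> nat \<Rightarrow> 'a \<Rightarrow> 'b"
    and p q t :: nat
    and \<alpha> \<gamma> Mg :: real
  assumes "prob_space M"
    and "p \<ge> 1"
    and "\<alpha> > 0"
    and "0 \<le> \<gamma>" and "\<gamma> < 1"
    and "\<And>w. (norm (Q w - w))\<^sup>2 \<le> \<gamma> * (norm w)\<^sup>2"
    and "\<And>s i. i \<in> {1..p} \<Longrightarrow>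
           integrable M (\<lambda>\<omega>. (norm (ef_grad Q G (\<lambda>s' j. \<xi> s' j \<omega>) p \<alpha> s i))\<^sup>2)"
    and "\<And>s i. i \<in> {1..p} \<Longrightarrow>
           (\<integral>\<omega>. (norm (ef_grad Q G (\<lambda>s' j. \<xi> s' j \<omega>) p \<alpha> s i))\<^sup>2 \<partial>M) \<le> Mg\<^sup>2"
    and "q \<in> {1..p}"
  shows "(\<integral>\<omega>. (norm (ef_x Q G (\<lambda>s j. \<xi> s j \<omega>) p \<alpha> t
                     - ef_view Q G (\<lambda>s j. \<xi> s j \<omega>) p \<alpha> t q))\<^sup>2 \<partial>M)
         \<le> (2 - \<gamma>) * \<gamma> * Mg\<^sup>2 * \<alpha>\<^sup>2 / (1 - \<gamma>)^3"
proof -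
  interpret prob_space M by fact
  define s where "s = sqrt \<gamma>"
  have \<gamma>: "\<gamma> = s\<^sup>2" and s: "0 \<le> s" "s < 1"
    using \<open>0 \<le> \<gamma>\<close> \<open>\<gamma> < 1\<close> by (auto simp: s_def)
  let ?g = "\<lambda>k i \<omega>. (norm (ef_grad Q G (\<lambda>s' j. \<xi> s' j \<omega>) p \<alpha> k i))\<^sup>2"
  let ?F = "\<lambda>\<omega>. (1 / real p) * (\<Sum>i\<in>{1..p}. s / (1 - s) * (\<Sum>k<t. s ^ (t - k) * (\<alpha>\<^sup>2 * ?g k i \<omega>)))"
  have F_nonneg: "0 \<le> ?F \<omega>" for \<omega>
    using s by (intro mult_nonneg_nonneg sum_nonneg) auto
  note F = expectation_discounted_mean_le[of s p "\<alpha>\<^sup>2" ?g, OF s \<open>p \<ge> 1\<close> _ assms(7,8)]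
  have "(\<integral>\<omega>. (norm (ef_x Q G (\<lambda>s j. \<xi> s j \<omega>) p \<alpha> t
                     - ef_view Q G (\<lambda>s j. \<xi> s j \<omega>) p \<alpha> t q))\<^sup>2 \<partial>M) \<le> integral\<^sup>L M ?F"
    using F(1) F_nonneg ef_x_minus_view_norm_sq_le[OF s, of Q] assms(6)
    by (intro integral_mono') (auto simp: \<gamma>)
  also have "\<dots> \<le> s\<^sup>2 / (1 - s)\<^sup>2 * (\<alpha>\<^sup>2 * Mg\<^sup>2)"
    using F(2) by simp
  also have "\<dots> \<le> (2 - s\<^sup>2) * s\<^sup>2 / (1 - s\<^sup>2) ^ 3 * (\<alpha>\<^sup>2 * Mg\<^sup>2)"
    using sq_div_one_minus_sq_le[OF s] by (intro mult_right_mono) auto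
  also have "\<dots> = (2 - \<gamma>) * \<gamma> * Mg\<^sup>2 * \<alpha>\<^sup>2 / (1 - \<gamma>) ^ 3"
    by (simp add: \<gamma>)
  finally show ?thesis .
qed

end
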